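(* Let $n=3$, $s_0,s_1,s_2,b_0,b_1,b_2\in\mathbb{R}$, $S=s_0+s_1+s_2$, and assume (C1)–(C21) hold. Then the conjunction of the rules (R1), (R2$_0$) and (R3$_0$) is equivalent to the conjunction of the following statements: (i) If $b_0=\frac12$, then (C4), (C8), (C10), (C11) are strict. (ii) If $b_1=\frac12$, then (C3), (C7), (C9), (C11) are strict. (iii) If $b_2=\frac12$, then (C2), (C6), (C9), (C10) are strict. (iv) If $b_0+b_1=1$, or $b_0+b_2=1$, or $b_1+b_2=1$, or $b_0+b_1+b_2=1$, then (C5) is strict. (v) If $b_0+b_1=\frac12$ then (C6) is strict; if $b_0+b_2=\frac12$ then (C7) is strict; if $b_1+b_2=\frac12$ then (C8) is strict. (vi) If $s_0-b_0$ equals one of $\frac52-2(b_0+b_1+b_2)$, $\frac32-2(b_0+b_1)$, $\frac32-2(b_0+b_2)$, $\frac12-2b_0$, $\frac12$, $\frac32-2b_0$, then (C13) is strict. (vii) If one of (C5)–(C12) is an equality, then (C16) and (C19) are strict.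
   Context: Conditions, with $S=s_0+s_1+s_2$: (C1) $b_0+b_1+b_2\ge\frac12$; (C2) $b_0+b_1\ge0$; (C3) $b_0+b_2\ge0$; (C4) $b_1+b_2\ge0$; (C5) $S\ge 2-(b_0+b_1+b_2)$; (C6) $S\ge\frac32-(b_0+b_1)$; (C7) $S\ge\frac32-(b_0+b_2)$; (C8) $S\ge\frac32-(b_1+b_2)$; (C9) $S\ge1-b_0$; (C10) $S\ge1-b_1$; (C11) $S\ge 1-b_2$; (C12) $S\ge1$; (C13) $s_0+b_0+2s_1+2s_2\ge\frac32$; (C14) $2s_0+s_1+b_1+2s_2\ge\frac32$; (C15) $2s_0+2s_1+s_2+b_2\ge\frac32$; (C16) $s_1+s_2\ge-b_0$; (C17) $s_0+s_2\ge-b_1$; (C18) $s_0+s_1\ge-b_2$; (C19) $s_1+s_2\ge0$; (C20) $s_0+s_2\ge0$; (C21) $s_0+s_1\ge0$. "Strict" means the inequality holds with $>$. Rules: (R1) It is not the case that both $b_0+b_1+b_2=\tfrac12$ and $b_0+b_1+b_2=\max(b_0,b_1,b_2)$. (R2$_0$) At most one of the following is an equality: (E1) $S\ge 2-(b_0+b_1+b_2)$; (E2) $S\ge \tfrac32+\max(-b_0-b_1,-b_0-b_2,-b_1-b_2)$; (E3) $S\ge 1+\max(-b_0,-b_1,-b_2,0)$; (E4$_0$) $S\ge s_0+\max(0,-b_0)$. (R3$_0$) At most one of the following is an equality: (E1), (E2), (E3), (E5$_0$) $S\ge \tfrac34+\tfrac{s_0-b_0}{2}$, (E6$_0$) $S\ge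 s_0$. *)

theory Defs
  imports Main "HOL.Real"
begin

definition at_most_one :: "bool list \<Rightarrow> bool" where
  "at_most_one xs \<longleftrightarrow> length (filter id xs) \<le> 1"

definition R1 :: "real \<Rightarrow> real \<Rightarrow> real \<Rightarrow> bool" where
  "R1 b0 b1 b2 \<longleftrightarrow>
     \<not> (b0 + b1 + b2 = 1/2 \<and> b0 + b1 + b2 = max b0 (max b1 b2))"

definition E1_eq :: "real \<Rightarrow> real \<Rightarrow> real \<Rightarrow> real \<Rightarrow> bool" where
  "E1_eq S b0 b1 b2 \<longleftrightarrow> S = 2 - (b0 + b1 + b2)"

definition E2_eq :: "real \<Rightarrow> real \<Rightarrow> real \<Rightarrow> real \<Rightarrow> bool" where
  "E2_eq S b0 b1 b2 \<longleftrightarrow> S = 3/2 + max (- b0 - b1) (max (- b0 - b2) (- b1 - b2))"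

definition E3_eq :: "real \<Rightarrow> real \<Rightarrow> real \<Rightarrow> real \<Rightarrow> bool" where
  "E3_eq S b0 b1 b2 \<longleftrightarrow> S = 1 + max (- b0) (max (- b1) (max (- b2) 0))"

text \<open>Rule (R2_0): at most one of (E1),(E2),(E3),(E4_0) is an equality.\<close>
definition R2_0 :: "real \<Rightarrow> real \<Rightarrow> real \<Rightarrow> real \<Rightarrow> real \<Rightarrow> real \<Rightarrow> bool" where
  "R2_0 s0 s1 s2 b0 b1 b2 \<longleftrightarrow>
     (let S = s0 + s1 + s2 in
      at_most_one [E1_eq S b0 b1 b2, E2_eq S b0 b1 b2, E3_eq S b0 b1 b2,
                   S = s0 + max 0 (- b0)])"

text \<open>Rule (R3_0): at most one of (E1),(E2),(E3),(E5_0),(E6_0) is an equality.\<close>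
definition R3_0 :: "real \<Rightarrow> real \<Rightarrow> real \<Rightarrow> real \<Rightarrow> real \<Rightarrow> real \<Rightarrow> bool" where
  "R3_0 s0 s1 s2 b0 b1 b2 \<longleftrightarrow>
     (let S = s0 + s1 + s2 in
      at_most_one [E1_eq S b0 b1 b2, E2_eq S b0 b1 b2, E3_eq S b0 b1 b2,
                   S = 3/4 + (s0 - b0) / 2, S = s0])"

end

theory Submission
  imports Defs
begin

(*
  Write S = s0 + s1 + s2.  Under the constraints (C1)-(C21) every quantity
  that the rules compare with S (resp. with s1 + s2) is a lower bound for it, so each
  "equality" (E1)-(E6) of the rules just says that one group of constraints is tight:
    (E1) C5 is tight,  (E2) one of C6-C8,  (E3) one of C9-C12,
    (E4) C16 or C19,   (E5) C13,           (E6) C19 (a special case of (E4)).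
  Hence (R2_0) and (R3_0) forbid certain pairs of tight groups.  Each forbidden
  coincidence is computed by linear arithmetic: it occurs exactly when one of the
  situations excluded by (i)-(vii) occurs, and (R1) is the strictness of C2-C4 in (i)-(iii).

  The only non-obvious exclusions are that a tight C13 can meet the bounds
  3/2 - (b1 + b2), 1 - b1, 1 - b2 only when S = 1 (lemma tight_C13_forces_S_1), and that a
  tight bound 3/2 - (b_i + b_j) never meets 1 - b_k for the third index k.
*)

lemma at_most_one_Cons:
  "at_most_one (x # xs) \<longleftrightarrow> (x \<longrightarrow> (\<forall>y\<in>set xs. \<not> y)) \<and> at_most_one xs"
  by (auto simp: at_most_one_def length_0_conv filter_empty_conv)

lemma at_most_one_Nil: "at_most_one []"
  by (simp add: at_most_one_def)

text \<open>If the pairwise sums are nonnegative, (R1) fails only when some b_i equals 1/2 and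
  the two others cancel: the sum can equal the largest entry only if the other two sum to 0.\<close>
lemma R1_iff_strict_pairs:
  fixes b0 b1 b2 :: real
  assumes "b0 + b1 \<ge> 0" and "b0 + b2 \<ge> 0" and "b1 + b2 \<ge> 0"
  shows "R1 b0 b1 b2 \<longleftrightarrow>
    (b0 = 1/2 \<longrightarrow> b1 + b2 > 0) \<and> (b1 = 1/2 \<longrightarrow> b0 + b2 > 0) \<and> (b2 = 1/2 \<longrightarrow> b0 + b1 > 0)"
  using assms unfolding R1_def max_def by auto

text \<open>The constraints among (C1)-(C21) that the analysis of coincidences uses.\<close>
locale admissible =
  fixes s0 s1 s2 b0 b1 b2 :: real
  assumes C5: "s0 + s1 + s2 \<ge> 2 - (b0 + b1 + b2)"
    and C6: "s0 + s1 + s2 \<ge> 3/2 - (b0 + b1)"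
    and C7: "s0 + s1 + s2 \<ge> 3/2 - (b0 + b2)"
    and C8: "s0 + s1 + s2 \<ge> 3/2 - (b1 + b2)"
    and C9: "s0 + s1 + s2 \<ge> 1 - b0"
    and C10: "s0 + s1 + s2 \<ge> 1 - b1"
    and C11: "s0 + s1 + s2 \<ge> 1 - b2"
    and C12: "s0 + s1 + s2 \<ge> 1"
    and C13: "s0 + b0 + 2 * s1 + 2 * s2 \<ge> 3/2"
    and C16: "s1 + s2 \<ge> - b0"
    and C19: "s1 + s2 \<ge> 0"
begin

abbreviation S :: real where "S \<equiv> s0 + s1 + s2"

definition tight_C5 :: bool where "tight_C5 \<longleftrightarrow> S = 2 - (b0 + b1 + b2)"
definition tight_C6_8 :: bool where
  "tight_C6_8 \<longleftrightarrow> S = 3/2 - (b0 + b1) \<or> S = 3/2 - (b0 + b2) \<or> S = 3/2 - (b1 + b2)"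
definition tight_C9_12 :: bool where
  "tight_C9_12 \<longleftrightarrow> S = 1 - b0 \<or> S = 1 - b1 \<or> S = 1 - b2 \<or> S = 1"
definition tight_C16_19 :: bool where "tight_C16_19 \<longleftrightarrow> s1 + s2 = - b0 \<or> s1 + s2 = 0"
definition tight_C13 :: bool where "tight_C13 \<longleftrightarrow> s0 + b0 + 2 * s1 + 2 * s2 = 3/2"
definition tight_C19 :: bool where "tight_C19 \<longleftrightarrow> s1 + s2 = 0"

text \<open>Each equality of the rules is the tightness of a constraint group, because the
  compared quantities are lower bounds for S (resp. s1 + s2).\<close>
lemma E1_eq_iff: "E1_eq S b0 b1 b2 \<longleftrightarrow> tight_C5"
  unfolding E1_eq_def tight_C5_def ..

lemma E2_eq_iff: "E2_eq S b0 b1 b2 \<longleftrightarrow> tight_C6_8"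
  using C6 C7 C8 unfolding E2_eq_def tight_C6_8_def max_def by auto

lemma E3_eq_iff: "E3_eq S b0 b1 b2 \<longleftrightarrow> tight_C9_12"
  using C9 C10 C11 C12 unfolding E3_eq_def tight_C9_12_def max_def by auto

lemma E4_eq_iff: "S = s0 + max 0 (- b0) \<longleftrightarrow> tight_C16_19"
  using C16 C19 unfolding tight_C16_19_def max_def by auto

lemma E5_eq_iff: "S = 3/4 + (s0 - b0) / 2 \<longleftrightarrow> tight_C13"
  unfolding tight_C13_def by (auto simp: field_simps)

lemma E6_eq_iff: "S = s0 \<longleftrightarrow> tight_C19"
  unfolding tight_C19_def by auto

text \<open>The rules say that certain pairs of constraint groups are never tight together.
  Pairs involving C19 alone are subsumed by those involving C16/C19.\<close>
lemma rules_iff_no_coincidence: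
  "(R1 b0 b1 b2 \<and> R2_0 s0 s1 s2 b0 b1 b2 \<and> R3_0 s0 s1 s2 b0 b1 b2) \<longleftrightarrow>
     R1 b0 b1 b2 \<and> \<not> (tight_C5 \<and> tight_C6_8) \<and> \<not> (tight_C5 \<and> tight_C9_12)
     \<and> \<not> (tight_C6_8 \<and> tight_C9_12)
     \<and> \<not> ((tight_C5 \<or> tight_C6_8 \<or> tight_C9_12) \<and> tight_C16_19)
     \<and> \<not> (tight_C13 \<and> (tight_C5 \<or> tight_C6_8 \<or> tight_C9_12 \<or> tight_C19))"
proof -
  have R2: "R2_0 s0 s1 s2 b0 b1 b2 \<longleftrightarrow>
      at_most_one [tight_C5, tight_C6_8, tight_C9_12, tight_C16_19]"
    unfolding R2_0_def Let_def E1_eq_iff E2_eq_iff E3_eq_iff E4_eq_iff ..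
  have R3: "R3_0 s0 s1 s2 b0 b1 b2 \<longleftrightarrow>
      at_most_one [tight_C5, tight_C6_8, tight_C9_12, tight_C13, tight_C19]"
    unfolding R3_0_def Let_def E1_eq_iff E2_eq_iff E3_eq_iff E5_eq_iff E6_eq_iff ..
  have "tight_C19 \<Longrightarrow> tight_C16_19"
    unfolding tight_C19_def tight_C16_19_def by simp
  then show ?thesis
    unfolding R2 R3 at_most_one_Cons by (auto simp: at_most_one_Nil)
qed

lemma no_C5_C6_8_coincidence:
  "\<not> (tight_C5 \<and> tight_C6_8) \<longleftrightarrow>
     (b0 = 1/2 \<longrightarrow> S > 3/2 - (b1 + b2)) \<and> (b1 = 1/2 \<longrightarrow> S > 3/2 - (b0 + b2))
     \<and> (b2 = 1/2 \<longrightarrow> S > 3/2 - (b0 + b1))"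
  using C6 C7 C8 unfolding tight_C5_def tight_C6_8_def by auto

lemma no_C5_C9_12_coincidence:
  "\<not> (tight_C5 \<and> tight_C9_12) \<longleftrightarrow>
     ((b0 + b1 = 1 \<or> b0 + b2 = 1 \<or> b1 + b2 = 1 \<or> b0 + b1 + b2 = 1) \<longrightarrow>
        S > 2 - (b0 + b1 + b2))"
  using C5 unfolding tight_C5_def tight_C9_12_def by auto

text \<open>One of C6-C8 and one of C9-C12 are tight together exactly when some b_i = 1/2 and
  S = 1 - b_j for another index j, or some b_i + b_j = 1/2 and S = 3/2 - (b_i + b_j) = 1.
  A tight bound 3/2 - (b_i + b_j) never meets the third bound 1 - b_k: then C5 gives
  b_k \<ge> 1/2 while C12 gives b_k \<le> 0.  As S lies above all bounds of C6-C11, excluding the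
  coincidence is the strictness of C9-C11 required in (i)-(iii), together with (v).\<close>
lemma no_C6_8_C9_12_coincidence:
  "\<not> (tight_C6_8 \<and> tight_C9_12) \<longleftrightarrow>
     (b0 = 1/2 \<longrightarrow> S > 1 - b1 \<and> S > 1 - b2) \<and> (b1 = 1/2 \<longrightarrow> S > 1 - b0 \<and> S > 1 - b2)
     \<and> (b2 = 1/2 \<longrightarrow> S > 1 - b0 \<and> S > 1 - b1)
     \<and> (b0 + b1 = 1/2 \<longrightarrow> S > 3/2 - (b0 + b1)) \<and> (b0 + b2 = 1/2 \<longrightarrow> S > 3/2 - (b0 + b2))
     \<and> (b1 + b2 = 1/2 \<longrightarrow> S > 3/2 - (b1 + b2))"
  using C5 C6 C7 C8 C9 C10 C11 C12 unfolding tight_C6_8_def tight_C9_12_def by argo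

text \<open>C16/C19 must not be tight together with C5, C6-C8 or C9-C12.  Since s1 + s2 lies
  above -b0 and 0, this is (vii).\<close>
lemma no_C16_19_coincidence:
  "\<not> ((tight_C5 \<or> tight_C6_8 \<or> tight_C9_12) \<and> tight_C16_19) \<longleftrightarrow>
     ((S = 2 - (b0 + b1 + b2) \<or> S = 3/2 - (b0 + b1) \<or> S = 3/2 - (b0 + b2)
       \<or> S = 3/2 - (b1 + b2) \<or> S = 1 - b0 \<or> S = 1 - b1 \<or> S = 1 - b2 \<or> S = 1) \<longrightarrow>
        s1 + s2 > - b0 \<and> s1 + s2 > 0)"
  using C16 C19 unfolding tight_C5_def tight_C6_8_def tight_C9_12_def tight_C16_19_def by argo

text \<open>When C13 is tight, the bounds 3/2 - (b1 + b2), 1 - b1 and 1 - b2 can be tight only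
  together with C12, i.e. when S = 1.  Tightness of C13 means s1 + s2 = 3/2 - S - b0, so C19
  reads S + b0 \<le> 3/2.  If S = 3/2 - (b1 + b2), then C5 gives b0 \<ge> 1/2 and C12 gives
  b1 + b2 \<le> 1/2, whence b1 + b2 = 1/2.  If S = 1 - b1, then C6 gives b0 \<ge> 1/2 and C12
  gives b1 \<le> 0, whence b1 = 0; the case S = 1 - b2 is symmetric, using C7.\<close>
lemma tight_C13_forces_S_1:
  assumes "tight_C13" and "S = 3/2 - (b1 + b2) \<or> S = 1 - b1 \<or> S = 1 - b2"
  shows "S = 1"
  using assms C5 C6 C7 C12 C19 unfolding tight_C13_def by linarith

text \<open>When C13 is tight, s0 - b0 = 2 S - 3/2, so tightness of C5, C6-C8, C9-C12 or C19
  becomes one of the six values of s0 - b0 listed in (vi).\<close>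
lemma no_C13_coincidence:
  "\<not> (tight_C13 \<and> (tight_C5 \<or> tight_C6_8 \<or> tight_C9_12 \<or> tight_C19)) \<longleftrightarrow>
     ((s0 - b0 = 5/2 - 2 * (b0 + b1 + b2) \<or> s0 - b0 = 3/2 - 2 * (b0 + b1)
       \<or> s0 - b0 = 3/2 - 2 * (b0 + b2) \<or> s0 - b0 = 1/2 - 2 * b0
       \<or> s0 - b0 = 1/2 \<or> s0 - b0 = 3/2 - 2 * b0) \<longrightarrow>
        s0 + b0 + 2 * s1 + 2 * s2 > 3/2)"
proof -
  have "tight_C13 \<and> (S = 3/2 - (b1 + b2) \<or> S = 1 - b1 \<or> S = 1 - b2) \<longrightarrow> S = 1"
    using tight_C13_forces_S_1 by blast
  then show ?thesis
    using C13 unfolding tight_C13_def tight_C5_def tight_C6_8_def tight_C9_12_def tight_C19_def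
    by argo
qed

end

theorem theorem3:
  fixes s0 s1 s2 b0 b1 b2 :: real
  assumes C1: "b0 + b1 + b2 \<ge> 1/2"
    and C2: "b0 + b1 \<ge> 0"
    and C3: "b0 + b2 \<ge> 0"
    and C4: "b1 + b2 \<ge> 0"
    and C5: "s0 + s1 + s2 \<ge> 2 - (b0 + b1 + b2)"
    and C6: "s0 + s1 + s2 \<ge> 3/2 - (b0 + b1)"
    and C7: "s0 + s1 + s2 \<ge> 3/2 - (b0 + b2)"
    and C8: "s0 + s1 + s2 \<ge> 3/2 - (b1 + b2)"
    and C9: "s0 + s1 + s2 \<ge> 1 - b0"
    and C10: "s0 + s1 + s2 \<ge> 1 - b1"
    and C11: "s0 + s1 + s2 \<ge> 1 - b2"
    and C12: "s0 + s1 + s2 \<ge> 1"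
    and C13: "s0 + b0 + 2 * s1 + 2 * s2 \<ge> 3/2"
    and C14: "2 * s0 + s1 + b1 + 2 * s2 \<ge> 3/2"
    and C15: "2 * s0 + 2 * s1 + s2 + b2 \<ge> 3/2"
    and C16: "s1 + s2 \<ge> - b0"
    and C17: "s0 + s2 \<ge> - b1"
    and C18: "s0 + s1 \<ge> - b2"
    and C19: "s1 + s2 \<ge> 0"
    and C20: "s0 + s2 \<ge> 0"
    and C21: "s0 + s1 \<ge> 0"
  shows "(R1 b0 b1 b2 \<and> R2_0 s0 s1 s2 b0 b1 b2 \<and> R3_0 s0 s1 s2 b0 b1 b2) \<longleftrightarrow>
    ((b0 = 1/2 \<longrightarrow>
        b1 + b2 > 0 \<and> s0 + s1 + s2 > 3/2 - (b1 + b2)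
        \<and> s0 + s1 + s2 > 1 - b1 \<and> s0 + s1 + s2 > 1 - b2) \<and>
     (b1 = 1/2 \<longrightarrow>
        b0 + b2 > 0 \<and> s0 + s1 + s2 > 3/2 - (b0 + b2)
        \<and> s0 + s1 + s2 > 1 - b0 \<and> s0 + s1 + s2 > 1 - b2) \<and>
     (b2 = 1/2 \<longrightarrow>
        b0 + b1 > 0 \<and> s0 + s1 + s2 > 3/2 - (b0 + b1)
        \<and> s0 + s1 + s2 > 1 - b0 \<and> s0 + s1 + s2 > 1 - b1) \<and>
     ((b0 + b1 = 1 \<or> b0 + b2 = 1 \<or> b1 + b2 = 1 \<or> b0 + b1 + b2 = 1) \<longrightarrow>
        s0 + s1 + s2 > 2 - (b0 + b1 + b2)) \<and>
     ((b0 + b1 = 1/2 \<longrightarrow> s0 + s1 + s2 > 3/2 - (b0 + b1)) \<and>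
      (b0 + b2 = 1/2 \<longrightarrow> s0 + s1 + s2 > 3/2 - (b0 + b2)) \<and>
      (b1 + b2 = 1/2 \<longrightarrow> s0 + s1 + s2 > 3/2 - (b1 + b2))) \<and>
     ((s0 - b0 = 5/2 - 2 * (b0 + b1 + b2) \<or> s0 - b0 = 3/2 - 2 * (b0 + b1)
       \<or> s0 - b0 = 3/2 - 2 * (b0 + b2) \<or> s0 - b0 = 1/2 - 2 * b0
       \<or> s0 - b0 = 1/2 \<or> s0 - b0 = 3/2 - 2 * b0) \<longrightarrow>
        s0 + b0 + 2 * s1 + 2 * s2 > 3/2) \<and>
     ((s0 + s1 + s2 = 2 - (b0 + b1 + b2) \<or> s0 + s1 + s2 = 3/2 - (b0 + b1)
       \<or> s0 + s1 + s2 = 3/2 - (b0 + b2) \<or> s0 + s1 + s2 = 3/2 - (b1 + b2)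
       \<or> s0 + s1 + s2 = 1 - b0 \<or> s0 + s1 + s2 = 1 - b1
       \<or> s0 + s1 + s2 = 1 - b2 \<or> s0 + s1 + s2 = 1) \<longrightarrow>
        s1 + s2 > - b0 \<and> s1 + s2 > 0))"
proof -
  interpret admissible s0 s1 s2 b0 b1 b2
    by unfold_locales (fact assms)+
  show ?thesis
    unfolding rules_iff_no_coincidence
    unfolding R1_iff_strict_pairs[OF C2 C3 C4] no_C5_C6_8_coincidence
      no_C5_C9_12_coincidence no_C6_8_C9_12_coincidence no_C16_19_coincidence
      no_C13_coincidence
    by argo
qed

end
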